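(* Let $\Omega\subseteq\mathbb{R}^d$ be compact and convex with non-empty interior $\Omega^\circ$, and let $p_0,p_1$ be Lebesgue densities supported on $\Omega$ that are continuous, uniformly bounded and bounded away from zero on $\Omega$. For $t\in(0,1)$, $z\in\Omega$ let $S_t(z)=\{\delta: z-t\delta\in\Omega,\ z+(1-t)\delta\in\Omega\}$ and for $z\in\Omega^\circ$ $$v(t,z)=\frac{\int_{S_t(z)}\delta\,p_0(z-t\delta)p_1(z+(1-t)\delta)d\delta}{\int_{S_t(z)}p_0(z-t\delta)p_1(z+(1-t)\delta)d\delta}.$$ Let $\hat p_0,\hat p_1$ be estimators (based on $n$ observations) of $p_0,p_1$, redefined to be $0$ outside $\Omega$, let $$r_n=\sup_{x\in\Omega}\max\Big\{\Big|\ln\frac{\hat p_0(x)}{p_0(x)}\Big|,\Big|\ln\frac{\hat p_1(x)}{p_1(x)}\Big|\Big\},$$ and define $\hat v^{\mathrm{den}}(t,z)$ by the same formula as $v(t,z)$ with $p_0,p_1$ replaced by $\hat p_0,\hat p_1$. Then for all $n\ge1$, $$\|\hat v^{\mathrm{den}}-v\|_\infty=\sup_{t\in[0,1],\,z\in\Omega^\circ}\|\hat v^{\mathrm{den}}(t,z)-v(t,z)\|\le2\,\mathrm{diam}(\Omega)(e^{4r_n}-1).$$ If $r_n=o_p(1)$ as $n\to\infty$, then $\sup_{t\in[0,1],\,z\in\Omega^\circ}\|\hat v^{\mathrm{den}}(t,z)-v(t,z)\|=O_p(r_n)$ as $n\to\infty$.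
   Context: The estimators need not be densities; $\hat v^{\mathrm{den}}$ is the density-based estimator of the rectified flow velocity field. *)

theory Defs
  imports "HOL-Probability.Probability"
begin

definition disp_set :: "'a::euclidean_space set \<Rightarrow> real \<Rightarrow> 'a \<Rightarrow> 'a set" where
  "disp_set \<Omega> t z = {\<delta>. z - t *\<^sub>R \<delta> \<in> \<Omega> \<and> z + (1 - t) *\<^sub>R \<delta> \<in> \<Omega>}"

definition rf_velocity ::
  "'a::euclidean_space set \<Rightarrow> ('a \<Rightarrow> real) \<Rightarrow> ('a \<Rightarrow> real) \<Rightarrow> real \<Rightarrow> 'a \<Rightarrow> 'a" where
  "rf_velocity \<Omega> q0 q1 t z =
     (1 / (LINT \<delta>:disp_set \<Omega> t z|lborel. q0 (z - t *\<^sub>R \<delta>) * q1 (z + (1 - t) *\<^sub>R \<delta>)))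
       *\<^sub>R (LINT \<delta>:disp_set \<Omega> t z|lborel.
              (q0 (z - t *\<^sub>R \<delta>) * q1 (z + (1 - t) *\<^sub>R \<delta>)) *\<^sub>R \<delta>)"

definition restrict0 :: "'a set \<Rightarrow> ('a \<Rightarrow> real) \<Rightarrow> 'a \<Rightarrow> real" where
  "restrict0 \<Omega> q x = (if x \<in> \<Omega> then q x else 0)"

text \<open>r_n = sup over \<Omega> of max |ln(q0/p0)|, |ln(q1/p1)|; equals \<infinity> where some
  estimate is non-positive (the logarithm is then -\<infinity> or undefined).\<close>
definition log_ratio_err ::
  "'a set \<Rightarrow> ('a \<Rightarrow> real) \<Rightarrow> ('a \<Rightarrow> real) \<Rightarrow> ('a \<Rightarrow> real) \<Rightarrow> ('a \<Rightarrow> real) \<Rightarrow> ereal" where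
  "log_ratio_err \<Omega> p0 p1 q0 q1 =
     (SUP x\<in>\<Omega>. if q0 x > 0 \<and> q1 x > 0
               then ereal (max \<bar>ln (q0 x / p0 x)\<bar> \<bar>ln (q1 x / p1 x)\<bar>) else \<infinity>)"

text \<open>Outer probability (as in van der Vaart & Wellner), so that o_p/O_p make sense
  without measurability assumptions on suprema.\<close>
definition outer_prob :: "'b measure \<Rightarrow> 'b set \<Rightarrow> real" where
  "outer_prob M A = Inf {measure M B | B. B \<in> sets M \<and> A \<subseteq> B}"

definition small_op_one :: "'b measure \<Rightarrow> (nat \<Rightarrow> 'b \<Rightarrow> ereal) \<Rightarrow> bool" where
  "small_op_one M X \<longleftrightarrow>
     (\<forall>\<epsilon>>0. (\<lambda>n. outer_prob M {\<omega>\<in>space M. \<bar>X n \<omega>\<bar> > ereal \<epsilon>}) \<longlonglongrightarrow> 0)"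

definition big_Op :: "'b measure \<Rightarrow> (nat \<Rightarrow> 'b \<Rightarrow> ereal) \<Rightarrow> (nat \<Rightarrow> 'b \<Rightarrow> ereal) \<Rightarrow> bool" where
  "big_Op M X R \<longleftrightarrow>
     (\<forall>\<epsilon>>0. \<exists>C::real. \<exists>N. \<forall>n\<ge>N.
        outer_prob M {\<omega>\<in>space M. \<bar>X n \<omega>\<bar> > ereal C * \<bar>R n \<omega>\<bar>} < \<epsilon>)"

end

theory Submission
  imports Defs
begin

text \<open>Both velocity fields are weighted means of the displacement \<delta> over S_t(z), a set of
  diameter at most 2 diam(\<Omega>) that contains a ball around 0 when z is interior. If the
  log-ratio error is r, the weights u built from the estimators and w built from p0, p1 satisfy
  e^(-2r) w \<le> u \<le> e^(2r) w, and two weighted means whose weights are comparable within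
  factors a \<le> b differ by at most (b/a - 1) times the diameter of the support. This gives
  2 diam(\<Omega>) (e^(4r) - 1). As e^(4r) - 1 \<le> 4 e^4 r for r \<le> 1, the error is linear in r
  outside the event r > 1, whose outer probability vanishes when r = o_p(1).\<close>

definition weighted_mean ::
  "'a measure \<Rightarrow> ('a \<Rightarrow> real) \<Rightarrow> 'a::{banach, second_countable_topology}" where
  "weighted_mean M w = (1 / integral\<^sup>L M w) *\<^sub>R integral\<^sup>L M (\<lambda>x. w x *\<^sub>R x)"

lemma integrable_scaleR_sub_const:
  fixes w :: "'a::{banach, second_countable_topology} \<Rightarrow> real"
  assumes "integrable M w" "integrable M (\<lambda>x. w x *\<^sub>R x)"
  shows "integrable M (\<lambda>x. w x *\<^sub>R (x - c))"
  using assms by (simp add: scaleR_diff_right)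

lemma weighted_mean_diff_eq:
  fixes w :: "'a::{banach, second_countable_topology} \<Rightarrow> real"
  assumes "integrable M w" "integrable M (\<lambda>x. w x *\<^sub>R x)" "integral\<^sup>L M w \<noteq> 0"
  shows "weighted_mean M w - c = (1 / integral\<^sup>L M w) *\<^sub>R integral\<^sup>L M (\<lambda>x. w x *\<^sub>R (x - c))"
  using assms by (simp add: weighted_mean_def scaleR_diff_right scaleR_diff_left)

lemma norm_weighted_mean_diff_le:
  fixes w :: "'a::{banach, second_countable_topology} \<Rightarrow> real"
  assumes w: "integrable M w" "integrable M (\<lambda>x. w x *\<^sub>R x)"
    and w_nonneg: "\<And>y. 0 \<le> w y" and W_pos: "0 < integral\<^sup>L M w"
    and near: "\<And>y. w y \<noteq> 0 \<Longrightarrow> norm (y - x) \<le> D"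
  shows "norm (weighted_mean M w - x) \<le> D"
proof -
  have "norm (integral\<^sup>L M (\<lambda>y. w y *\<^sub>R (y - x))) \<le> integral\<^sup>L M (\<lambda>y. norm (w y *\<^sub>R (y - x)))"
    by (rule integral_norm_bound)
  also have "\<dots> \<le> integral\<^sup>L M (\<lambda>y. D * w y)"
  proof (rule integral_mono)
    fix y show "norm (w y *\<^sub>R (y - x)) \<le> D * w y"
      using near[of y] w_nonneg[of y] by (cases "w y = 0") (auto simp: mult.commute mult_left_mono)
  qed (use w integrable_norm[OF integrable_scaleR_sub_const[OF w]] in auto)
  finally show ?thesis
    using W_pos w by (simp add: weighted_mean_diff_eq divide_le_eq mult.commute)
qed

text \<open>Since the deviations from the mean v of w integrate to 0 against w, the difference of the
  means is (1/U) times the integral of (u - a w)(x - v), where U = \<integral>u \<ge> a \<integral>w.\<close>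
lemma norm_weighted_mean_diff_weighted_mean_le:
  fixes w u :: "'a::{banach, second_countable_topology} \<Rightarrow> real"
  assumes w: "integrable M w" "integrable M (\<lambda>x. w x *\<^sub>R x)"
    and u: "integrable M u" "integrable M (\<lambda>x. u x *\<^sub>R x)"
    and w_nonneg: "\<And>x. 0 \<le> w x" and lower: "\<And>x. a * w x \<le> u x" and upper: "\<And>x. u x \<le> b * w x"
    and a_pos: "0 < a" and W_pos: "0 < integral\<^sup>L M w"
    and diam: "\<And>x y. w x \<noteq> 0 \<Longrightarrow> w y \<noteq> 0 \<Longrightarrow> norm (x - y) \<le> D"
  shows "norm (weighted_mean M u - weighted_mean M w) \<le> D * (b / a - 1)"
proof -
  define W U v where "W = integral\<^sup>L M w" and "U = integral\<^sup>L M u" and "v = weighted_mean M w"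
  define J where "J = integral\<^sup>L M (\<lambda>x. (u x - a * w x) *\<^sub>R (x - v))"
  have "integral\<^sup>L M (\<lambda>x. a * w x) \<le> U"
    unfolding U_def using w u lower by (intro integral_mono) auto
  then have aW_le_U: "a * W \<le> U"
    by (simp add: W_def)
  then have U_pos: "0 < U"
    using mult_pos_pos[OF a_pos W_pos] by (simp add: W_def)
  have centered: "integral\<^sup>L M (\<lambda>x. w x *\<^sub>R (x - v)) = 0"
    using weighted_mean_diff_eq[OF w, of v] W_pos by (simp add: v_def)
  have "weighted_mean M u - v = (1 / U) *\<^sub>R integral\<^sup>L M (\<lambda>x. u x *\<^sub>R (x - v))"
    using weighted_mean_diff_eq[OF u] U_pos by (simp add: U_def)
  also have "integral\<^sup>L M (\<lambda>x. u x *\<^sub>R (x - v)) = J"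
    using centered integrable_scaleR_sub_const[OF w] integrable_scaleR_sub_const[OF u]
    by (simp add: J_def scaleR_diff_left flip: scaleR_scaleR)
  finally have diff_eq: "weighted_mean M u - v = (1 / U) *\<^sub>R J" .
  have "norm J \<le> integral\<^sup>L M (\<lambda>x. norm ((u x - a * w x) *\<^sub>R (x - v)))"
    unfolding J_def by (rule integral_norm_bound)
  also have "\<dots> \<le> integral\<^sup>L M (\<lambda>x. ((b - a) * D) * w x)"
  proof (rule integral_mono)
    fix x
    show "norm ((u x - a * w x) *\<^sub>R (x - v)) \<le> ((b - a) * D) * w x"
    proof (cases "w x = 0")
      case False
      have "norm (x - v) \<le> D"
        using norm_weighted_mean_diff_le[OF w w_nonneg W_pos, of x D] diam[OF False]
        by (simp add: v_def norm_minus_commute)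
      moreover have "0 \<le> u x - a * w x" "u x - a * w x \<le> (b - a) * w x"
        using lower[of x] upper[of x] by (auto simp: algebra_simps)
      ultimately have "(u x - a * w x) * norm (x - v) \<le> ((b - a) * w x) * D"
        by (intro mult_mono) auto
      then show ?thesis
        using \<open>0 \<le> u x - a * w x\<close> by (simp add: mult_ac)
    qed (use lower[of x] upper[of x] in simp)
  qed (use w u in \<open>auto intro!: integrable_norm Bochner_Integration.integrable_diff
         simp: scaleR_diff_left integrable_scaleR_sub_const simp flip: scaleR_scaleR\<close>)
  finally have "norm J \<le> ((b - a) * D) * W"
    by (simp add: W_def)
  then have "norm (weighted_mean M u - v) \<le> ((b - a) * D) * W / U"
    using U_pos by (simp add: diff_eq divide_right_mono)
  also have "\<dots> \<le> ((b - a) * D) * W / (a * W)"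
  proof (rule divide_left_mono)
    show "0 \<le> (b - a) * D * W"
      using order_trans[OF norm_ge_zero calculation] U_pos by (simp add: zero_le_divide_iff)
  qed (use aW_le_U a_pos W_pos U_pos W_def in auto)
  also have "\<dots> = D * (b / a - 1)"
    using W_pos a_pos by (simp add: W_def field_simps)
  finally show ?thesis
    by (simp add: v_def)
qed

lemma closed_disp_set:
  assumes "closed \<Omega>"
  shows "closed (disp_set \<Omega> t z)"
proof -
  have "disp_set \<Omega> t z = (\<lambda>\<delta>. z - t *\<^sub>R \<delta>) -` \<Omega> \<inter> (\<lambda>\<delta>. z + (1 - t) *\<^sub>R \<delta>) -` \<Omega>"
    by (auto simp: disp_set_def)
  then show ?thesis
    by (simp add: closed_Int continuous_closed_vimage[OF assms])
qed

lemma zero_mem_disp_set: "z \<in> \<Omega> \<Longrightarrow> 0 \<in> disp_set \<Omega> t z"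
  by (simp add: disp_set_def)

text \<open>Both endpoints z - t\<delta> and z + (1 - t)\<delta> lie in \<Omega>, so t|\<delta> - \<epsilon>| and (1 - t)|\<delta> - \<epsilon>| are
  both at most diam(\<Omega>).\<close>
lemma norm_diff_disp_set_le:
  assumes "bounded \<Omega>" "0 \<le> t" "t \<le> 1" "\<delta> \<in> disp_set \<Omega> t z" "\<epsilon> \<in> disp_set \<Omega> t z"
  shows "norm (\<delta> - \<epsilon>) \<le> 2 * diameter \<Omega>"
proof -
  have "dist (z - t *\<^sub>R \<epsilon>) (z - t *\<^sub>R \<delta>) \<le> diameter \<Omega>"
    "dist (z + (1 - t) *\<^sub>R \<delta>) (z + (1 - t) *\<^sub>R \<epsilon>) \<le> diameter \<Omega>"
    using assms by (auto intro: diameter_bounded_bound simp only: disp_set_def mem_Collect_eq)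
  moreover have "(z - t *\<^sub>R \<epsilon>) - (z - t *\<^sub>R \<delta>) = t *\<^sub>R (\<delta> - \<epsilon>)"
    "(z + (1 - t) *\<^sub>R \<delta>) - (z + (1 - t) *\<^sub>R \<epsilon>) = (1 - t) *\<^sub>R (\<delta> - \<epsilon>)"
    by (simp_all add: algebra_simps)
  then have "dist (z - t *\<^sub>R \<epsilon>) (z - t *\<^sub>R \<delta>) = t * norm (\<delta> - \<epsilon>)"
    "dist (z + (1 - t) *\<^sub>R \<delta>) (z + (1 - t) *\<^sub>R \<epsilon>) = (1 - t) * norm (\<delta> - \<epsilon>)"
    using assms(2,3) by (simp_all add: dist_norm)
  ultimately show ?thesis
    by (simp add: algebra_simps)
qed

lemma bounded_disp_set:
  assumes "bounded \<Omega>" "0 \<le> t" "t \<le> 1" "z \<in> \<Omega>"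
  shows "bounded (disp_set \<Omega> t z)"
  unfolding bounded_iff
  using norm_diff_disp_set_le[OF assms(1-3) _ zero_mem_disp_set[OF assms(4)]] by auto

lemma ball_subset_disp_set:
  assumes "z \<in> interior \<Omega>" "0 \<le> t" "t \<le> 1"
  obtains e where "e > 0" "ball 0 e \<subseteq> disp_set \<Omega> t z"
proof -
  obtain e where e: "e > 0" "ball z e \<subseteq> \<Omega>"
    using assms(1) mem_interior by metis
  have "\<delta> \<in> disp_set \<Omega> t z" if "norm \<delta> < e" for \<delta>
  proof -
    have "t * norm \<delta> \<le> norm \<delta>" "(1 - t) * norm \<delta> \<le> norm \<delta>"
      using assms(2,3) by (simp_all add: mult_left_le_one_le)
    then have "norm (t *\<^sub>R \<delta>) < e" "norm ((1 - t) *\<^sub>R \<delta>) < e"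
      using that assms(2,3) by auto
    then show ?thesis
      using e(2) by (auto simp: disp_set_def dist_norm)
  qed
  then show ?thesis
    using that e(1) by (auto simp: subset_iff)
qed

lemma integrable_weight_on_bounded_set:
  fixes f :: "'a::euclidean_space \<Rightarrow> real"
  assumes S: "S \<in> sets borel" "bounded S" and f: "f \<in> borel_measurable borel"
    and f_bound: "\<And>x. x \<in> S \<Longrightarrow> \<bar>f x\<bar> \<le> K"
  defines "w \<equiv> \<lambda>x. indicator S x * f x"
  shows "integrable lborel w" and "integrable lborel (\<lambda>x. w x *\<^sub>R x)"
proof -
  obtain R where R: "\<And>x. x \<in> S \<Longrightarrow> norm x \<le> R"
    using S(2) bounded_iff by metis
  have finite: "emeasure lborel S < \<infinity>"
    by (rule emeasure_bounded_finite[OF S(2)])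
  show "integrable lborel w"
    using S f f_bound finite unfolding w_def
    by (intro integrableI_bounded_set[where A=S and B=K]) auto
  have "\<bar>f x\<bar> * norm x \<le> K * R" if "x \<in> S" for x
    using f_bound[OF that] R[OF that] by (intro mult_mono) (auto intro: order_trans[OF abs_ge_zero])
  then show "integrable lborel (\<lambda>x. w x *\<^sub>R x)"
    using S f finite unfolding w_def
    by (intro integrableI_bounded_set[where A=S and B="K * R"]) auto
qed

lemma integral_pos_if_ge_on_ball:
  fixes f :: "'a::euclidean_space \<Rightarrow> real"
  assumes "integrable lborel f" "\<And>x. 0 \<le> f x"
    and "0 < c" "0 < e" "\<And>x. x \<in> ball x0 e \<Longrightarrow> c \<le> f x"
  shows "0 < integral\<^sup>L lborel f"
proof -
  have "0 < c * measure lborel (ball x0 e)"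
    using assms(3,4) by simp
  also have "\<dots> = integral\<^sup>L lborel (\<lambda>x. c * indicator (ball x0 e) x)"
    by simp
  also have "\<dots> \<le> integral\<^sup>L lborel f"
  proof (rule integral_mono)
    show "integrable lborel (\<lambda>x. c * indicator (ball x0 e) x)"
      using emeasure_bounded_finite[of "ball x0 e"] by (auto intro: integrable_real_indicator)
  qed (use assms in \<open>auto simp: indicator_def\<close>)
  finally show ?thesis .
qed

lemma norm_weighted_mean_on_set_diff_le:
  fixes f g :: "'a::euclidean_space \<Rightarrow> real"
  assumes S: "S \<in> sets borel" "bounded S" "0 < e" "ball x0 e \<subseteq> S"
    and meas: "f \<in> borel_measurable borel" "g \<in> borel_measurable borel"
    and f_bounds: "0 < c" "\<And>x. x \<in> S \<Longrightarrow> c \<le> f x \<and> f x \<le> B"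
    and g_bounds: "\<And>x. x \<in> S \<Longrightarrow> exp (-s) * f x \<le> g x \<and> g x \<le> exp s * f x"
    and diam: "\<And>x y. x \<in> S \<Longrightarrow> y \<in> S \<Longrightarrow> norm (x - y) \<le> D"
  shows "norm (weighted_mean lborel (\<lambda>x. indicator S x * g x)
               - weighted_mean lborel (\<lambda>x. indicator S x * f x)) \<le> D * (exp (2 * s) - 1)"
proof -
  define w u where "w = (\<lambda>x. indicator S x * f x)" and "u = (\<lambda>x. indicator S x * g x)"
  have f_nonneg: "0 \<le> f x" if "x \<in> S" for x
    using f_bounds(1) f_bounds(2)[OF that] by linarith
  have f_abs: "\<bar>f x\<bar> \<le> B" and g_abs: "\<bar>g x\<bar> \<le> exp s * B" if "x \<in> S" for x
  proof -
    have "0 \<le> exp (-s) * f x" "exp s * f x \<le> exp s * B"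
      using f_nonneg[OF that] f_bounds(2)[OF that] by simp_all
    then show "\<bar>f x\<bar> \<le> B" "\<bar>g x\<bar> \<le> exp s * B"
      using f_nonneg[OF that] f_bounds(2)[OF that] g_bounds[OF that] unfolding abs_le_iff by linarith+
  qed
  have w: "integrable lborel w" "integrable lborel (\<lambda>x. w x *\<^sub>R x)"
    using integrable_weight_on_bounded_set[OF S(1,2) meas(1) f_abs] unfolding w_def by auto
  have u: "integrable lborel u" "integrable lborel (\<lambda>x. u x *\<^sub>R x)"
    using integrable_weight_on_bounded_set[OF S(1,2) meas(2) g_abs] unfolding u_def by auto
  have w_nonneg: "0 \<le> w x" and u_lower: "exp (-s) * w x \<le> u x" and u_upper: "u x \<le> exp s * w x"
    for x
    using f_nonneg g_bounds by (simp_all add: w_def u_def indicator_def)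
  have W_pos: "0 < integral\<^sup>L lborel w"
    using S f_bounds f_nonneg w(1)
    by (intro integral_pos_if_ge_on_ball[where c=c and e=e])
       (auto simp: w_def indicator_def subset_iff)
  have support_diam: "norm (x - y) \<le> D" if "w x \<noteq> 0" "w y \<noteq> 0" for x y
    using that diam by (auto simp: w_def indicator_def split: if_splits)
  have "norm (weighted_mean lborel u - weighted_mean lborel w) \<le> D * (exp s / exp (-s) - 1)"
    by (rule norm_weighted_mean_diff_weighted_mean_le[OF w u w_nonneg u_lower u_upper exp_gt_zero
          W_pos support_diam])
  also have "exp s / exp (-s) = exp (2 * s)"
    using exp_diff[of s "-s"] by simp
  finally show ?thesis
    by (simp add: w_def u_def)
qed

lemma mult_between_exp_bounds:
  fixes p0 p1 q0 q1 r :: real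
  assumes "0 \<le> p0" "0 \<le> p1"
    and "exp (-r) * p0 \<le> q0" "q0 \<le> exp r * p0" "exp (-r) * p1 \<le> q1" "q1 \<le> exp r * p1"
  shows "exp (-(2 * r)) * (p0 * p1) \<le> q0 * q1 \<and> q0 * q1 \<le> exp (2 * r) * (p0 * p1)"
proof -
  have "0 \<le> exp (-r) * p0" "0 \<le> exp (-r) * p1" "0 \<le> exp r * p0"
    using assms(1,2) by simp_all
  then have "(exp (-r) * p0) * (exp (-r) * p1) \<le> q0 * q1" "q0 * q1 \<le> (exp r * p0) * (exp r * p1)"
    using assms(3-6) by (intro mult_mono; linarith)+
  moreover have "exp (-(2 * r)) = exp (-r) * exp (-r)" "exp (2 * r) = exp r * exp r"
    by (simp_all flip: exp_add)
  ultimately show ?thesis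
    by (simp add: mult_ac)
qed

lemma rf_velocity_eq_weighted_mean:
  "rf_velocity \<Omega> q0 q1 t z = weighted_mean lborel
     (\<lambda>\<delta>. indicator (disp_set \<Omega> t z) \<delta> * (q0 (z - t *\<^sub>R \<delta>) * q1 (z + (1 - t) *\<^sub>R \<delta>)))"
  by (simp add: rf_velocity_def weighted_mean_def set_lebesgue_integral_def)

lemma norm_rf_velocity_diff_le:
  fixes \<Omega> :: "'a::euclidean_space set"
  assumes \<Omega>: "compact \<Omega>" and z: "z \<in> interior \<Omega>" and t: "0 \<le> t" "t \<le> 1"
    and [measurable]: "p0 \<in> borel_measurable borel" "p1 \<in> borel_measurable borel"
      "q0 \<in> borel_measurable borel" "q1 \<in> borel_measurable borel"
    and lower: "0 < c" "\<And>x. x \<in> \<Omega> \<Longrightarrow> c \<le> p0 x \<and> c \<le> p1 x"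
    and upper: "\<And>x. x \<in> \<Omega> \<Longrightarrow> p0 x \<le> B \<and> p1 x \<le> B"
    and ratio: "\<And>x. x \<in> \<Omega> \<Longrightarrow> exp (-r) * p0 x \<le> q0 x \<and> q0 x \<le> exp r * p0 x
                              \<and> exp (-r) * p1 x \<le> q1 x \<and> q1 x \<le> exp r * p1 x"
  shows "norm (rf_velocity \<Omega> q0 q1 t z - rf_velocity \<Omega> p0 p1 t z)
           \<le> 2 * diameter \<Omega> * (exp (4 * r) - 1)"
proof -
  define S where "S = disp_set \<Omega> t z"
  have endpoints: "z - t *\<^sub>R \<delta> \<in> \<Omega>" "z + (1 - t) *\<^sub>R \<delta> \<in> \<Omega>" if "\<delta> \<in> S" for \<delta>
    using that by (simp_all add: S_def disp_set_def)
  define fp fq where "fp = (\<lambda>\<delta>. p0 (z - t *\<^sub>R \<delta>) * p1 (z + (1 - t) *\<^sub>R \<delta>))"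
    and "fq = (\<lambda>\<delta>. q0 (z - t *\<^sub>R \<delta>) * q1 (z + (1 - t) *\<^sub>R \<delta>))"
  have fp_bounds: "c * c \<le> fp \<delta> \<and> fp \<delta> \<le> B * B"
    and fq_bounds: "exp (-(2 * r)) * fp \<delta> \<le> fq \<delta> \<and> fq \<delta> \<le> exp (2 * r) * fp \<delta>"
    if \<delta>: "\<delta> \<in> S" for \<delta>
  proof -
    obtain x y where xy: "x \<in> \<Omega>" "y \<in> \<Omega>" "fp \<delta> = p0 x * p1 y" "fq \<delta> = q0 x * q1 y"
      using endpoints[OF \<delta>] by (simp add: fp_def fq_def)
    have "c \<le> p0 x" "c \<le> p1 y" "p0 x \<le> B" "p1 y \<le> B"
      using lower(2) upper xy by auto
    then show "c * c \<le> fp \<delta> \<and> fp \<delta> \<le> B * B"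
      unfolding xy(3) using lower(1) by (intro conjI mult_mono) linarith+
    show "exp (-(2 * r)) * fp \<delta> \<le> fq \<delta> \<and> fq \<delta> \<le> exp (2 * r) * fp \<delta>"
      unfolding xy(3,4) using \<open>c \<le> p0 x\<close> \<open>c \<le> p1 y\<close> lower(1) ratio[OF xy(1)] ratio[OF xy(2)]
      by (intro mult_between_exp_bounds) auto
  qed
  have meas: "fp \<in> borel_measurable borel" "fq \<in> borel_measurable borel"
    unfolding fp_def fq_def by measurable
  obtain e where e: "0 < e" "ball 0 e \<subseteq> S"
    using ball_subset_disp_set[OF z t] unfolding S_def by metis
  have S_borel: "S \<in> sets borel"
    unfolding S_def by (intro borel_closed closed_disp_set compact_imp_closed \<Omega>)
  have S_bounded: "bounded S"
    unfolding S_def using z interior_subset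
    by (intro bounded_disp_set[OF compact_imp_bounded[OF \<Omega>] t]) auto
  have diam: "norm (\<delta> - \<epsilon>) \<le> 2 * diameter \<Omega>" if "\<delta> \<in> S" "\<epsilon> \<in> S" for \<delta> \<epsilon>
    using norm_diff_disp_set_le[OF compact_imp_bounded[OF \<Omega>] t] that by (simp add: S_def)
  have "0 < c * c"
    using lower(1) by simp
  from norm_weighted_mean_on_set_diff_le[OF S_borel S_bounded e meas this fp_bounds fq_bounds diam]
  have "norm (weighted_mean lborel (\<lambda>\<delta>. indicator S \<delta> * fq \<delta>)
      - weighted_mean lborel (\<lambda>\<delta>. indicator S \<delta> * fp \<delta>)) \<le> 2 * diameter \<Omega> * (exp (2 * (2 * r)) - 1)" .
  then show ?thesis
    by (simp add: rf_velocity_eq_weighted_mean S_def fp_def fq_def)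
qed

lemma exp_bounds_of_abs_ln_divide_le:
  fixes p q r :: real
  assumes "0 < p" "0 < q" "\<bar>ln (q / p)\<bar> \<le> r"
  shows "exp (-r) * p \<le> q \<and> q \<le> exp r * p"
proof -
  have "exp (-r) \<le> exp (ln (q / p))" "exp (ln (q / p)) \<le> exp r"
    using assms(3) by simp_all
  then have "exp (-r) \<le> q / p" "q / p \<le> exp r"
    using assms(1,2) by simp_all
  then show ?thesis
    using assms(1) by (simp add: pos_le_divide_eq pos_divide_le_eq)
qed

lemma log_ratio_err_nonneg:
  assumes "\<Omega> \<noteq> {}"
  shows "0 \<le> log_ratio_err \<Omega> p0 p1 q0 q1"
proof -
  obtain x where "x \<in> \<Omega>"
    using assms by blast
  then show ?thesis
    unfolding log_ratio_err_def by (rule SUP_upper2) (auto simp: le_max_iff_disj)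
qed

lemma ratio_bounds_of_log_ratio_err_le:
  assumes "log_ratio_err \<Omega> p0 p1 q0 q1 \<le> ereal r" "x \<in> \<Omega>" "0 < p0 x" "0 < p1 x"
  shows "exp (-r) * p0 x \<le> q0 x \<and> q0 x \<le> exp r * p0 x
    \<and> exp (-r) * p1 x \<le> q1 x \<and> q1 x \<le> exp r * p1 x"
proof -
  have "(if q0 x > 0 \<and> q1 x > 0
           then ereal (max \<bar>ln (q0 x / p0 x)\<bar> \<bar>ln (q1 x / p1 x)\<bar>) else \<infinity>) \<le> ereal r"
    using assms(1) order_trans[OF SUP_upper[OF assms(2)]] unfolding log_ratio_err_def by blast
  then have "0 < q0 x" "0 < q1 x" "\<bar>ln (q0 x / p0 x)\<bar> \<le> r" "\<bar>ln (q1 x / p1 x)\<bar> \<le> r"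
    by (auto split: if_splits)
  then show ?thesis
    using assms(3,4) exp_bounds_of_abs_ln_divide_le[of "p0 x" "q0 x" r]
      exp_bounds_of_abs_ln_divide_le[of "p1 x" "q1 x" r] by simp
qed

lemma sup_norm_rf_velocity_diff_le:
  fixes \<Omega> :: "'a::euclidean_space set"
  assumes \<Omega>: "compact \<Omega>"
    and meas: "p0 \<in> borel_measurable borel" "p1 \<in> borel_measurable borel"
      "q0 \<in> borel_measurable borel" "q1 \<in> borel_measurable borel"
    and lower: "\<exists>c>0. \<forall>x\<in>\<Omega>. c \<le> p0 x" "\<exists>c>0. \<forall>x\<in>\<Omega>. c \<le> p1 x"
    and upper: "\<exists>B. \<forall>x\<in>\<Omega>. p0 x \<le> B" "\<exists>B. \<forall>x\<in>\<Omega>. p1 x \<le> B"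
    and err: "log_ratio_err \<Omega> p0 p1 q0 q1 \<le> ereal r"
  shows "(SUP (t, z)\<in>{0..1} \<times> interior \<Omega>.
            ereal (norm (rf_velocity \<Omega> (restrict0 \<Omega> q0) (restrict0 \<Omega> q1) t z
                         - rf_velocity \<Omega> p0 p1 t z)))
         \<le> ereal (2 * diameter \<Omega> * (exp (4 * r) - 1))"
proof (rule SUP_least, clarify)
  fix t :: real and z :: 'a assume t: "t \<in> {0..1}" and z: "z \<in> interior \<Omega>"
  obtain c0 c1 B0 B1 where "0 < c0" "0 < c1"
    and "\<And>x. x \<in> \<Omega> \<Longrightarrow> c0 \<le> p0 x \<and> c1 \<le> p1 x \<and> p0 x \<le> B0 \<and> p1 x \<le> B1"
    using lower upper by metis
  then have c_pos: "0 < min c0 c1" and c_le: "\<And>x. x \<in> \<Omega> \<Longrightarrow> min c0 c1 \<le> p0 x \<and> min c0 c1 \<le> p1 x"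
    and le_B: "\<And>x. x \<in> \<Omega> \<Longrightarrow> p0 x \<le> max B0 B1 \<and> p1 x \<le> max B0 B1"
    by (auto simp: min.coboundedI1 min.coboundedI2 max.coboundedI1 max.coboundedI2)
  have [measurable]: "\<Omega> \<in> sets borel"
    using \<Omega> by (simp add: borel_compact)
  have "restrict0 \<Omega> q0 \<in> borel_measurable borel" "restrict0 \<Omega> q1 \<in> borel_measurable borel"
    using meas unfolding restrict0_def by measurable
  moreover have "exp (-r) * p0 x \<le> restrict0 \<Omega> q0 x \<and> restrict0 \<Omega> q0 x \<le> exp r * p0 x
      \<and> exp (-r) * p1 x \<le> restrict0 \<Omega> q1 x \<and> restrict0 \<Omega> q1 x \<le> exp r * p1 x"
    if "x \<in> \<Omega>" for x
  proof -
    have "0 < p0 x" "0 < p1 x"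
      using c_pos c_le[OF that] by auto
    then show ?thesis
      using ratio_bounds_of_log_ratio_err_le[OF err that] that by (simp add: restrict0_def)
  qed
  ultimately show "ereal (norm (rf_velocity \<Omega> (restrict0 \<Omega> q0) (restrict0 \<Omega> q1) t z
                     - rf_velocity \<Omega> p0 p1 t z)) \<le> ereal (2 * diameter \<Omega> * (exp (4 * r) - 1))"
    using norm_rf_velocity_diff_le[OF \<Omega> z _ _ meas(1,2) _ _ c_pos c_le le_B] t by simp
qed

lemma outer_prob_mono:
  assumes "A \<subseteq> A'" "A' \<subseteq> space M"
  shows "outer_prob M A \<le> outer_prob M A'"
  unfolding outer_prob_def
proof (rule cInf_superset_mono)
  show "{measure M B |B. B \<in> sets M \<and> A' \<subseteq> B} \<noteq> {}"
    using assms(2) by blast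
  show "bdd_below {measure M B |B. B \<in> sets M \<and> A \<subseteq> B}"
    by (rule bdd_belowI[where m=0]) auto
qed (use assms(1) in blast)

lemma big_Op_if_small_op_one:
  assumes small: "small_op_one M R"
    and linear: "\<And>n \<omega>. \<omega> \<in> space M \<Longrightarrow> \<bar>R n \<omega>\<bar> \<le> 1 \<Longrightarrow> \<bar>X n \<omega>\<bar> \<le> ereal C * \<bar>R n \<omega>\<bar>"
  shows "big_Op M X R"
  unfolding big_Op_def
proof (intro allI impI)
  fix \<epsilon> :: real assume "0 < \<epsilon>"
  have "(\<lambda>n. outer_prob M {\<omega>\<in>space M. \<bar>R n \<omega>\<bar> > ereal 1}) \<longlonglongrightarrow> 0"
    using small unfolding small_op_one_def by simp
  from order_tendstoD(2)[OF this \<open>0 < \<epsilon>\<close>]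
  obtain N where N: "\<And>n. N \<le> n \<Longrightarrow> outer_prob M {\<omega>\<in>space M. \<bar>R n \<omega>\<bar> > ereal 1} < \<epsilon>"
    unfolding eventually_sequentially by blast
  have "outer_prob M {\<omega>\<in>space M. \<bar>X n \<omega>\<bar> > ereal C * \<bar>R n \<omega>\<bar>} < \<epsilon>" if "N \<le> n" for n
  proof -
    have "\<bar>R n \<omega>\<bar> > ereal 1" if "\<omega> \<in> space M" "\<bar>X n \<omega>\<bar> > ereal C * \<bar>R n \<omega>\<bar>" for \<omega>
    proof (rule ccontr)
      assume "\<not> \<bar>R n \<omega>\<bar> > ereal 1"
      then have "\<bar>R n \<omega>\<bar> \<le> 1"
        by (simp add: not_less one_ereal_def)
      from linear[OF that(1) this] that(2) show False
        by simp
    qed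
    then have "outer_prob M {\<omega>\<in>space M. \<bar>X n \<omega>\<bar> > ereal C * \<bar>R n \<omega>\<bar>}
        \<le> outer_prob M {\<omega>\<in>space M. \<bar>R n \<omega>\<bar> > ereal 1}"
      by (intro outer_prob_mono) auto
    then show ?thesis
      using N[OF that] by linarith
  qed
  then show "\<exists>C N. \<forall>n\<ge>N. outer_prob M {\<omega>\<in>space M. \<bar>X n \<omega>\<bar> > ereal C * \<bar>R n \<omega>\<bar>} < \<epsilon>"
    by blast
qed

lemma exp_minus_one_le:
  fixes x :: real
  assumes "0 \<le> x"
  shows "exp x - 1 \<le> x * exp x"
proof -
  have "(1 - x) * exp x \<le> exp (-x) * exp x"
    using exp_ge_add_one_self[of "-x"] by (intro mult_right_mono) auto
  then show ?thesis
    by (simp add: algebra_simps flip: exp_add)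
qed

lemma abs_le_linear_if_exp_bound:
  fixes X L :: ereal
  assumes "0 \<le> X" "0 \<le> L" "\<bar>L\<bar> \<le> 1" "0 \<le> D"
    and bound: "\<And>r. L \<le> ereal r \<Longrightarrow> X \<le> ereal (2 * D * (exp (4 * r) - 1))"
  shows "\<bar>X\<bar> \<le> ereal (8 * D * exp 4) * \<bar>L\<bar>"
proof -
  obtain r where r: "L = ereal r" "0 \<le> r" "r \<le> 1"
    using assms(2,3) by (cases L) auto
  have "\<bar>X\<bar> = X"
    using assms(1) by (rule abs_ereal_ge0)
  also have "X \<le> ereal (2 * D * (exp (4 * r) - 1))"
    using bound r(1) by simp
  also have "2 * D * (exp (4 * r) - 1) \<le> 2 * D * (4 * r * exp 4)"
  proof (intro mult_left_mono)
    have "exp (4 * r) - 1 \<le> 4 * r * exp (4 * r)"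
      using exp_minus_one_le r(2) by simp
    also have "\<dots> \<le> 4 * r * exp 4"
      using r(2,3) by (intro mult_left_mono) auto
    finally show "exp (4 * r) - 1 \<le> 4 * r * exp 4" .
  qed (use assms(4) in simp)
  finally show ?thesis
    using r by (simp add: mult_ac)
qed

theorem theorem11:
  fixes \<Omega> :: "'a::euclidean_space set"
    and p0 p1 :: "'a \<Rightarrow> real"
    and M :: "'b measure"
    and ph0 ph1 :: "nat \<Rightarrow> 'b \<Rightarrow> 'a \<Rightarrow> real"
  assumes "compact \<Omega>" and "convex \<Omega>" and "interior \<Omega> \<noteq> {}"
    and dens: "\<And>p. p \<in> {p0, p1} \<Longrightarrow>
        (\<forall>x. p x \<ge> 0) \<and> (\<forall>x. x \<notin> \<Omega> \<longrightarrow> p x = 0) \<and> integrable lborel p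
        \<and> integral\<^sup>L lborel p = 1 \<and> continuous_on \<Omega> p
        \<and> (\<exists>B. \<forall>x\<in>\<Omega>. p x \<le> B) \<and> (\<exists>c>0. \<forall>x\<in>\<Omega>. c \<le> p x)"
    and "prob_space M"
    and meas: "\<And>n \<omega>. ph0 n \<omega> \<in> borel_measurable lborel \<and> ph1 n \<omega> \<in> borel_measurable lborel"
  shows "(\<forall>n\<ge>1. \<forall>\<omega>.
            log_ratio_err \<Omega> p0 p1 (ph0 n \<omega>) (ph1 n \<omega>) \<noteq> \<infinity> \<longrightarrow>
            (SUP (t, z)\<in>{0..1} \<times> interior \<Omega>.
               ereal (norm (rf_velocity \<Omega> (restrict0 \<Omega> (ph0 n \<omega>)) (restrict0 \<Omega> (ph1 n \<omega>)) t z
                            - rf_velocity \<Omega> p0 p1 t z)))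
            \<le> ereal (2 * diameter \<Omega> *
                (exp (4 * real_of_ereal (log_ratio_err \<Omega> p0 p1 (ph0 n \<omega>) (ph1 n \<omega>))) - 1)))
       \<and> (small_op_one M (\<lambda>n \<omega>. log_ratio_err \<Omega> p0 p1 (ph0 n \<omega>) (ph1 n \<omega>)) \<longrightarrow>
          big_Op M
            (\<lambda>n \<omega>. SUP (t, z)\<in>{0..1} \<times> interior \<Omega>.
               ereal (norm (rf_velocity \<Omega> (restrict0 \<Omega> (ph0 n \<omega>)) (restrict0 \<Omega> (ph1 n \<omega>)) t z
                            - rf_velocity \<Omega> p0 p1 t z)))
            (\<lambda>n \<omega>. log_ratio_err \<Omega> p0 p1 (ph0 n \<omega>) (ph1 n \<omega>)))"
proof -
  let ?L = "\<lambda>n \<omega>. log_ratio_err \<Omega> p0 p1 (ph0 n \<omega>) (ph1 n \<omega>)"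
  let ?X = "\<lambda>n \<omega>. SUP (t, z)\<in>{0..1} \<times> interior \<Omega>.
    ereal (norm (rf_velocity \<Omega> (restrict0 \<Omega> (ph0 n \<omega>)) (restrict0 \<Omega> (ph1 n \<omega>)) t z
                 - rf_velocity \<Omega> p0 p1 t z))"
  have meas_p: "p0 \<in> borel_measurable borel" "p1 \<in> borel_measurable borel"
    using dens[of p0] dens[of p1] borel_measurable_integrable by auto
  have bound: "?X n \<omega> \<le> ereal (2 * diameter \<Omega> * (exp (4 * r) - 1))" if "?L n \<omega> \<le> ereal r" for n \<omega> r
    using sup_norm_rf_velocity_diff_le[OF assms(1) meas_p _ _ _ _ _ _ that] dens[of p0] dens[of p1] meas
    by simp
  obtain z0 where z0: "z0 \<in> interior \<Omega>"
    using assms(3) by blast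
  have L_nonneg: "0 \<le> ?L n \<omega>" for n \<omega>
    using z0 interior_subset by (intro log_ratio_err_nonneg) blast
  have X_nonneg: "0 \<le> ?X n \<omega>" for n \<omega>
    using z0 by (intro SUP_upper2[of "(0, z0)"]) auto
  have diam_nonneg: "0 \<le> diameter \<Omega>"
    using diameter_ge_0[OF compact_imp_bounded[OF assms(1)]] .
  show ?thesis
  proof (intro conjI impI allI)
    fix n \<omega> assume "?L n \<omega> \<noteq> \<infinity>"
    then show "?X n \<omega> \<le> ereal (2 * diameter \<Omega> * (exp (4 * real_of_ereal (?L n \<omega>)) - 1))"
      using L_nonneg[of n \<omega>] by (intro bound) (cases "?L n \<omega>"; simp)
  next
    assume "small_op_one M ?L"
    then show "big_Op M ?X ?L"
      using abs_le_linear_if_exp_bound[OF X_nonneg L_nonneg _ diam_nonneg bound]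
      by (rule big_Op_if_small_op_one)
  qed
qed

end
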